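(* Let $\mathcal{S}\subseteq 2^{[n]}$ be a Sperner family and let $h:\mathcal{S}\to 2^{[n]}$ be a function with $h(S)\subseteq S$ for every $S\in\mathcal{S}$. Then $\mathcal{F}=\mathcal{F}(\mathcal{S},h)$ is s-extremal with $\mathrm{Sh}(\mathcal{F})=\mathcal{H}(\mathcal{S})$ if and only if $|\mathcal{F}(\mathcal{S},h)|=|\mathcal{H}(\mathcal{S})|$.
   Context: $[n]=\{1,\dots,n\}$. A Sperner family is a family of sets none of which is contained in another. $\mathcal{F}\subseteq 2^{[n]}$ shatters $S$ if $\{F\cap S:F\in\mathcal{F}\}=2^S$; $\mathrm{Sh}(\mathcal{F})$ is the family of shattered sets; $\mathcal{F}$ is s-extremal if $|\mathrm{Sh}(\mathcal{F})|=|\mathcal{F}|$. For $H\subseteq S\subseteq[n]$: $\mathcal{P}_S=\{S\cup B: B\subseteq[n]\setminus S\}$ and $\mathcal{Q}_{S,H}=\{H\cup B: B\subseteq[n]\setminus S\}$. $\mathrm{Up}(\mathcal{S})=\bigcup_{S\in\mathcal{S}}\mathcal{P}_S$, $\mathcal{H}(\mathcal{S})=2^{[n]}\setminus\mathrm{Up}(\mathcal{S})$, and $\mathcal{F}(\mathcal{S},h)=2^{[n]}\setminus\bigcup_{S\in\mathcal{S}}\mathcal{Q}_{S,h(S)}$. *)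

theory Defs
  imports Main
begin

definition sperner :: "'a set set \<Rightarrow> bool" where
  "sperner S \<longleftrightarrow> (\<forall>A\<in>S. \<forall>B\<in>S. A \<subseteq> B \<longrightarrow> A = B)"

definition shatters :: "'a set set \<Rightarrow> 'a set \<Rightarrow> bool" where
  "shatters F S \<longleftrightarrow> (\<lambda>F'. F' \<inter> S) ` F = Pow S"

definition Sh :: "nat \<Rightarrow> nat set set \<Rightarrow> nat set set" where
  "Sh n F = {S. S \<subseteq> {1..n} \<and> shatters F S}"

definition s_extremal :: "nat \<Rightarrow> nat set set \<Rightarrow> bool" where
  "s_extremal n F \<longleftrightarrow> card (Sh n F) = card F"

definition P_fam :: "nat \<Rightarrow> nat set \<Rightarrow> nat set set" where
  "P_fam n S = {S \<union> B | B. B \<subseteq> {1..n} - S}"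

definition Q_fam :: "nat \<Rightarrow> nat set \<Rightarrow> nat set \<Rightarrow> nat set set" where
  "Q_fam n S H = {H \<union> B | B. B \<subseteq> {1..n} - S}"

definition Up :: "nat \<Rightarrow> nat set set \<Rightarrow> nat set set" where
  "Up n \<S> = (\<Union>S\<in>\<S>. P_fam n S)"

definition H_fam :: "nat \<Rightarrow> nat set set \<Rightarrow> nat set set" where
  "H_fam n \<S> = Pow {1..n} - Up n \<S>"

definition F_fam :: "nat \<Rightarrow> nat set set \<Rightarrow> (nat set \<Rightarrow> nat set) \<Rightarrow> nat set set" where
  "F_fam n \<S> h = Pow {1..n} - (\<Union>S\<in>\<S>. Q_fam n S (h S))"

end

theory Submission
  imports Defs
begin

text \<open>By Pajor's lemma a family F \<subseteq> 2^[n] shatters at least |F| subsets of [n].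
  For F = F(\<S>,h) no set of Up(\<S>) is shattered: if T \<supseteq> S \<in> \<S> were, some A \<in> F
  would have trace h(S) on T, hence on S, which puts A into Q_{S,h(S)}. So Sh(F) \<subseteq> H(\<S>),
  and |F| = |H(\<S>)| turns |F| \<le> |Sh(F)| \<le> |H(\<S>)| into equalities.\<close>

lemma shatters_iff: "shatters F S \<longleftrightarrow> Pow S \<subseteq> (\<lambda>A. A \<inter> S) ` F"
  unfolding shatters_def
proof
  show "Pow S \<subseteq> (\<lambda>A. A \<inter> S) ` F \<Longrightarrow> (\<lambda>A. A \<inter> S) ` F = Pow S"
    by (intro equalityI image_subsetI) auto
qed simp

lemma shatters_mono: "F \<subseteq> G \<Longrightarrow> shatters F S \<Longrightarrow> shatters G S"
  unfolding shatters_iff by (meson image_mono subset_trans)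

lemma shatters_image_Diff_singleton:
  assumes "x \<notin> S"
  shows "shatters ((\<lambda>A. A - {x}) ` F) S \<longleftrightarrow> shatters F S"
proof -
  have "(\<lambda>A. A \<inter> S) ` (\<lambda>A. A - {x}) ` F = (\<lambda>A. A \<inter> S) ` F"
    using assms by (auto simp: image_image intro!: image_cong)
  then show ?thesis unfolding shatters_def by simp
qed

lemma shatters_insert:
  assumes "x \<notin> S"
    and avoid: "shatters {A \<in> F. x \<notin> A} S"
    and contain: "shatters ((\<lambda>A. A - {x}) ` {A \<in> F. x \<in> A}) S"
  shows "shatters F (insert x S)"
  unfolding shatters_iff
proof
  fix U assume U: "U \<in> Pow (insert x S)"
  show "U \<in> (\<lambda>A. A \<inter> insert x S) ` F"
  proof (cases "x \<in> U")
    case True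
    have "U - {x} \<in> Pow S" using U by auto
    then have "U - {x} \<in> (\<lambda>A. A \<inter> S) ` (\<lambda>A. A - {x}) ` {A \<in> F. x \<in> A}"
      using contain unfolding shatters_iff by (rule subsetD[rotated])
    then obtain A where "A \<in> F" "x \<in> A" "(A - {x}) \<inter> S = U - {x}" by blast
    moreover from this True assms(1) have "A \<inter> insert x S = U" by auto
    ultimately show ?thesis by blast
  next
    case False
    then have "U \<in> Pow S" using U by auto
    then have "U \<in> (\<lambda>A. A \<inter> S) ` {A \<in> F. x \<notin> A}"
      using avoid unfolding shatters_iff by (rule subsetD[rotated])
    then obtain A where "A \<in> F" "x \<notin> A" "A \<inter> S = U" by blast
    moreover from this have "A \<inter> insert x S = U" by auto
    ultimately show ?thesis by blast
  qed
qed

lemma card_Un_plus_card_Int_eq_card_Un_insert: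
  assumes fin: "finite \<A>" "finite \<B>" and x: "\<forall>A \<in> \<A> \<union> \<B>. x \<notin> A"
  shows "card \<A> + card \<B> = card (\<A> \<union> \<B> \<union> insert x ` (\<A> \<inter> \<B>))"
proof -
  have "inj_on (insert x) (\<A> \<inter> \<B>)"
  proof (rule inj_onI)
    fix A B assume "A \<in> \<A> \<inter> \<B>" "B \<in> \<A> \<inter> \<B>" "insert x A = insert x B"
    with x show "A = B" by (metis Diff_insert_absorb IntD1 UnI1)
  qed
  have "card \<A> + card \<B> = card (\<A> \<union> \<B>) + card (\<A> \<inter> \<B>)"
    using fin by (rule card_Un_Int)
  also have "card (\<A> \<inter> \<B>) = card (insert x ` (\<A> \<inter> \<B>))"
    using \<open>inj_on (insert x) (\<A> \<inter> \<B>)\<close> by (rule card_image[symmetric])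
  also have "card (\<A> \<union> \<B>) + \<dots> = card (\<A> \<union> \<B> \<union> insert x ` (\<A> \<inter> \<B>))"
    using fin x by (intro card_Un_disjoint[symmetric]) auto
  finally show ?thesis .
qed

lemma card_le_card_shattered:
  assumes "finite X" "F \<subseteq> Pow X"
  shows "card F \<le> card {S. S \<subseteq> X \<and> shatters F S}"
  using assms
proof (induction X arbitrary: F rule: finite_induct)
  case empty
  then have "F = {} \<or> F = {{}}" by (simp add: subset_singleton_iff)
  then show ?case by (auto simp: shatters_def Collect_conv_if)
next
  case (insert x X)
  define F0 where "F0 = {A \<in> F. x \<notin> A}"
  define F1 where "F1 = (\<lambda>A. A - {x}) ` {A \<in> F. x \<in> A}"
  define Sh0 where "Sh0 = {S. S \<subseteq> X \<and> shatters F0 S}"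
  define Sh1 where "Sh1 = {S. S \<subseteq> X \<and> shatters F1 S}"
  have "finite F" using insert.prems insert.hyps(1) by (simp add: finite_subset)
  have F0X: "F0 \<subseteq> Pow X" and F1X: "F1 \<subseteq> Pow X"
    using insert.prems unfolding F0_def F1_def by auto
  have "F = F0 \<union> {A \<in> F. x \<in> A}" "F0 \<inter> {A \<in> F. x \<in> A} = {}"
    unfolding F0_def by auto
  then have "card F = card F0 + card {A \<in> F. x \<in> A}"
    using \<open>finite F\<close> by (metis card_Un_disjoint finite_Un)
  also have "card {A \<in> F. x \<in> A} = card F1"
    unfolding F1_def by (rule card_image[symmetric]) (auto intro!: inj_onI)
  also have "card F0 + card F1 \<le> card Sh0 + card Sh1"
    unfolding Sh0_def Sh1_def using insert.IH[OF F0X] insert.IH[OF F1X] by (rule add_mono)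
  also have "\<dots> = card (Sh0 \<union> Sh1 \<union> insert x ` (Sh0 \<inter> Sh1))"
    using insert.hyps
    by (intro card_Un_plus_card_Int_eq_card_Un_insert) (auto simp: Sh0_def Sh1_def)
  also have "\<dots> \<le> card {S. S \<subseteq> insert x X \<and> shatters F S}"
  proof (rule card_mono)
    show "finite {S. S \<subseteq> insert x X \<and> shatters F S}"
      using insert.hyps(1) by simp
    have "shatters F S" if "S \<in> Sh0 \<union> Sh1" for S
    proof -
      have "x \<notin> S" using that insert.hyps(2) by (auto simp: Sh0_def Sh1_def)
      then have "shatters F0 S \<or> shatters {A \<in> F. x \<in> A} S"
        using that by (auto simp: Sh0_def Sh1_def F1_def shatters_image_Diff_singleton)
      then show ?thesis
        by (elim disjE) (erule shatters_mono[rotated], auto simp: F0_def)+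
    qed
    moreover have "shatters F (insert x S)" if "S \<in> Sh0 \<inter> Sh1" for S
    proof (rule shatters_insert)
      show "x \<notin> S" using that insert.hyps(2) by (auto simp: Sh0_def)
      show "shatters {A \<in> F. x \<notin> A} S" "shatters ((\<lambda>A. A - {x}) ` {A \<in> F. x \<in> A}) S"
        using that unfolding Sh0_def Sh1_def F0_def F1_def by auto
    qed
    ultimately show "Sh0 \<union> Sh1 \<union> insert x ` (Sh0 \<inter> Sh1) \<subseteq> {S. S \<subseteq> insert x X \<and> shatters F S}"
      unfolding Sh0_def Sh1_def by blast
  qed
  finally show ?case .
qed

lemma card_le_card_Sh: "F \<subseteq> Pow {1..n} \<Longrightarrow> card F \<le> card (Sh n F)"
  unfolding Sh_def by (rule card_le_card_shattered) simp_all

lemma Sh_F_fam_subset_H_fam: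
  assumes h: "\<forall>S\<in>\<S>. h S \<subseteq> S"
  shows "Sh n (F_fam n \<S> h) \<subseteq> H_fam n \<S>"
proof
  fix T assume "T \<in> Sh n (F_fam n \<S> h)"
  then have T: "T \<subseteq> {1..n}" "shatters (F_fam n \<S> h) T" unfolding Sh_def by auto
  have "T \<notin> P_fam n S" if S: "S \<in> \<S>" for S
  proof
    assume "T \<in> P_fam n S"
    then have "S \<subseteq> T" unfolding P_fam_def by blast
    with h S have "h S \<in> Pow T" by blast
    with T(2) have "h S \<in> (\<lambda>A. A \<inter> T) ` F_fam n \<S> h"
      unfolding shatters_iff by (rule subsetD)
    then obtain A where A: "A \<in> F_fam n \<S> h" "A \<inter> T = h S" by (rule imageE) simp
    have "A \<subseteq> {1..n}" using A(1) unfolding F_fam_def by blast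
    moreover have "A \<inter> S = h S" using A(2) \<open>S \<subseteq> T\<close> h S by blast
    ultimately have "A = h S \<union> (A - S)" "A - S \<subseteq> {1..n} - S" by blast+
    then have "A \<in> Q_fam n S (h S)" unfolding Q_fam_def by blast
    with A(1) S show False unfolding F_fam_def by blast
  qed
  with T(1) show "T \<in> H_fam n \<S>" unfolding H_fam_def Up_def by blast
qed

theorem proposition7:
  fixes n :: nat and \<S> :: "nat set set" and h :: "nat set \<Rightarrow> nat set"
  assumes "\<S> \<subseteq> Pow {1..n}"
    and "sperner \<S>"
    and "\<forall>S\<in>\<S>. h S \<subseteq> S"
  shows "(s_extremal n (F_fam n \<S> h) \<and> Sh n (F_fam n \<S> h) = H_fam n \<S>)
     \<longleftrightarrow> card (F_fam n \<S> h) = card (H_fam n \<S>)"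
proof
  assume "s_extremal n (F_fam n \<S> h) \<and> Sh n (F_fam n \<S> h) = H_fam n \<S>"
  then show "card (F_fam n \<S> h) = card (H_fam n \<S>)" unfolding s_extremal_def by metis
next
  assume eq: "card (F_fam n \<S> h) = card (H_fam n \<S>)"
  have sub: "Sh n (F_fam n \<S> h) \<subseteq> H_fam n \<S>"
    using assms(3) by (rule Sh_F_fam_subset_H_fam)
  have fin: "finite (H_fam n \<S>)" unfolding H_fam_def by simp
  have "card (F_fam n \<S> h) \<le> card (Sh n (F_fam n \<S> h))"
    by (rule card_le_card_Sh) (unfold F_fam_def, blast)
  moreover have "card (Sh n (F_fam n \<S> h)) \<le> card (H_fam n \<S>)"
    using fin sub by (rule card_mono)
  ultimately have card_Sh: "card (Sh n (F_fam n \<S> h)) = card (H_fam n \<S>)"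
    using eq by linarith
  then have "Sh n (F_fam n \<S> h) = H_fam n \<S>"
    using fin sub by (intro card_subset_eq) simp_all
  with card_Sh eq show "s_extremal n (F_fam n \<S> h) \<and> Sh n (F_fam n \<S> h) = H_fam n \<S>"
    unfolding s_extremal_def by simp
qed

end
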